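(* Let $G$ be a graph with $n\geq 1$ vertices, $m$ edges, and maximum degree at most $\Delta$, where $\Delta$ is a positive integer. Then $$irr(G)\leq \frac{(\Delta n-2m)\Delta m}{\Delta n-m}<\left(3-2\sqrt{2}\right)\Delta^2 n.$$
   Context: All graphs are finite, simple and undirected. For a graph $G$ with edge set $E(G)$ and vertex degrees $d_G(u)$, the irregularity (in the sense of Albertson) is $irr(G)=\sum_{uv\in E(G)}|d_G(u)-d_G(v)|$. *)

theory Defs
  imports Complex_Main
begin

definition simple_graph :: "'a set \<Rightarrow> 'a set set \<Rightarrow> bool" where
  "simple_graph V E \<longleftrightarrow> finite V \<and> (\<forall>e\<in>E. e \<subseteq> V \<and> card e = 2)"

definition degree :: "'a set set \<Rightarrow> 'a \<Rightarrow> nat" where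
  "degree E v = card {e \<in> E. v \<in> e}"

definition irr :: "'a set set \<Rightarrow> nat" where
  "irr E = (\<Sum>e\<in>E. THE k. \<exists>u v. e = {u, v} \<and> u \<noteq> v \<and>
                 k = nat \<bar>int (degree E u) - int (degree E v)\<bar>)"

end

theory Submission
  imports Defs
begin

text \<open>For an edge e let a(e) be the smaller endpoint degree. Then |d(u) - d(v)| \<le> \<Delta> - a(e), so
  irr(G) \<le> \<Delta>m - \<Sigma> a(e). Double counting gives \<Sigma> (1/d(u) + 1/d(v)) \<le> n, hence
  \<Sigma> 1/a(e) \<le> n - m/\<Delta>, and Cauchy-Schwarz yields \<Sigma> a(e) \<ge> m^2/(n - m/\<Delta>), which is the
  first bound. The second is the maximum of x(N - 2x)/(N - x) over x, attained only at an
  irrational multiple of N = \<Delta>n, hence strict.\<close>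

lemma twice_square_eq_square_nat: "2 * k\<^sup>2 = (j::nat)\<^sup>2 \<Longrightarrow> k = 0"
proof (induction j arbitrary: k rule: less_induct)
  case (less j)
  then have "even j" by (metis dvd_triv_left even_power pos2)
  then obtain j' where j: "j = 2 * j'" ..
  then have "k\<^sup>2 = 2 * j'\<^sup>2" using less.prems by (simp add: power2_eq_square)
  then have "even k" by (metis dvd_triv_left even_power pos2)
  then obtain k' where k: "k = 2 * k'" ..
  have "2 * k'\<^sup>2 = j'\<^sup>2" using less.prems j k by (simp add: power2_eq_square)
  moreover have "j' < j" if "j \<noteq> 0" using j that by simp
  ultimately show ?case using less.IH less.prems k by (cases "j = 0") auto
qed

lemma sqrt_2_mult_nat_neq_nat: "p > 0 \<Longrightarrow> sqrt 2 * real p \<noteq> real q"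
proof
  assume "p > 0" "sqrt 2 * real p = real q"
  then have "real (2 * p\<^sup>2) = real (q\<^sup>2)"
    by (metis of_nat_mult of_nat_numeral of_nat_power power_mult_distrib real_sqrt_pow2 zero_le_numeral)
  then have "p = 0" by (intro twice_square_eq_square_nat) (simp only: of_nat_eq_iff)
  with \<open>p > 0\<close> show False by simp
qed

lemma mult_diff_lt_3_minus_2_sqrt_2:
  fixes N m :: real
  assumes "sqrt 2 * (N - m) \<noteq> N"
  shows "(N - 2 * m) * m < (3 - 2 * sqrt 2) * N * (N - m)"
proof -
  have "(3 - 2 * sqrt 2) * N * (N - m) - (N - 2 * m) * m = (N - sqrt 2 * (N - m))\<^sup>2"
    by (simp add: power2_eq_square algebra_simps)
  moreover have "(N - sqrt 2 * (N - m))\<^sup>2 > 0" using assms by simp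
  ultimately show ?thesis by linarith
qed

lemma sum_edges_sum_endpoints:
  fixes f :: "'a \<Rightarrow> 'b::comm_semiring_1"
  assumes "finite V" "finite E" "\<forall>e\<in>E. e \<subseteq> V"
  shows "(\<Sum>e\<in>E. \<Sum>v\<in>e. f v) = (\<Sum>v\<in>V. of_nat (degree E v) * f v)"
proof -
  have "(\<Sum>e\<in>E. \<Sum>v\<in>e. f v) = (\<Sum>e\<in>E. \<Sum>v\<in>V. if v \<in> e then f v else 0)"
    using assms by (intro sum.cong[OF refl]) (simp add: sum.If_cases Int_absorb1)
  also have "\<dots> = (\<Sum>v\<in>V. \<Sum>e\<in>E. if v \<in> e then f v else 0)"
    by (rule sum.swap)
  also have "\<dots> = (\<Sum>v\<in>V. of_nat (degree E v) * f v)"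
    using assms by (simp add: sum.If_cases degree_def Int_def conj_commute)
  finally show ?thesis .
qed

lemma sum_ge_tangent_bound:
  fixes x :: "'i \<Rightarrow> real" and L :: real
  assumes "\<forall>i\<in>I. x i > 0"
  shows "2 * L * card I - L\<^sup>2 * (\<Sum>i\<in>I. 1 / x i) \<le> (\<Sum>i\<in>I. x i)"
proof (cases "finite I")
  case True
  have "2 * L - L\<^sup>2 * (1 / x i) \<le> x i" if "i \<in> I" for i
  proof -
    have x: "x i > 0" using assms that by blast
    then have "0 \<le> (x i - L)\<^sup>2 / x i" by simp
    also have "\<dots> = x i - (2 * L - L\<^sup>2 * (1 / x i))"
      using x by (simp add: field_simps power2_eq_square)
    finally show ?thesis by simp
  qed
  then have "(\<Sum>i\<in>I. 2 * L - L\<^sup>2 * (1 / x i)) \<le> (\<Sum>i\<in>I. x i)"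
    by (rule sum_mono)
  then show ?thesis by (simp add: sum_subtractf sum_distrib_left mult.commute)
qed simp

context
  fixes V :: "'a set" and E :: "'a set set"
  assumes graph: "simple_graph V E"
begin

lemma finite_edges: "finite E"
  using graph unfolding simple_graph_def by (intro finite_subset[of E "Pow V"]) auto

lemma edges_subset_vertices: "\<forall>e\<in>E. e \<subseteq> V"
  using graph unfolding simple_graph_def by blast

lemma edgeE:
  assumes "e \<in> E"
  obtains u v where "e = {u, v}" "u \<noteq> v" "u \<in> V" "v \<in> V"
  using graph assms unfolding simple_graph_def by (auto simp: card_2_iff)

lemma degree_pos_if_mem_edge: "e \<in> E \<Longrightarrow> v \<in> e \<Longrightarrow> degree E v > 0"
  unfolding degree_def using finite_edges by (auto simp: card_gt_0_iff)

lemma sum_degree_eq_twice_card_edges: "(\<Sum>v\<in>V. degree E v) = 2 * card E"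
proof -
  have "(\<Sum>v\<in>V. degree E v) = (\<Sum>e\<in>E. card e)"
    using sum_edges_sum_endpoints[of V E "\<lambda>_. 1::nat"] graph finite_edges edges_subset_vertices
    by (simp add: simple_graph_def)
  also have "\<dots> = 2 * card E"
    using graph by (simp add: simple_graph_def)
  finally show ?thesis .
qed

lemma irr_eq_sum_Max_minus_Min:
  "irr E = (\<Sum>e\<in>E. Max (degree E ` e) - Min (degree E ` e))"
  unfolding irr_def
proof (rule sum.cong[OF refl])
  have diff: "nat \<bar>int (degree E u) - int (degree E v)\<bar>
      = Max (degree E ` e) - Min (degree E ` e)" if "e = {u, v}" for e u v
    using that by auto
  fix e assume "e \<in> E"
  then obtain u v where "e = {u, v}" "u \<noteq> v" by (rule edgeE)
  then show "(THE k. \<exists>u v. e = {u, v} \<and> u \<noteq> v \<and> k = nat \<bar>int (degree E u) - int (degree E v)\<bar>)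
      = Max (degree E ` e) - Min (degree E ` e)"
    by (intro the_equality) (auto simp only: diff)
qed

lemma sum_inverse_degree_edge:
  assumes "e \<in> E"
  shows "(\<Sum>v\<in>e. 1 / real (degree E v))
    = 1 / real (Min (degree E ` e)) + 1 / real (Max (degree E ` e))"
proof -
  obtain u v where "e = {u, v}" "u \<noteq> v" using assms by (rule edgeE)
  then show ?thesis by (simp add: min_def max_def)
qed

lemma Min_degree_edge_pos:
  assumes "e \<in> E"
  shows "Min (degree E ` e) > 0"
proof -
  obtain u v where "e = {u, v}" using assms by (rule edgeE)
  then show ?thesis using degree_pos_if_mem_edge[OF assms] by simp
qed

lemma irr_le_max_degree_sum_Min:
  assumes "\<forall>v\<in>V. degree E v \<le> \<Delta>"
  shows "real (irr E) \<le> real \<Delta> * card E - (\<Sum>e\<in>E. real (Min (degree E ` e)))"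
proof -
  have "Min (degree E ` e) \<le> Max (degree E ` e) \<and> Max (degree E ` e) \<le> \<Delta>"
    if "e \<in> E" for e
  proof -
    obtain u v where "e = {u, v}" "u \<in> V" "v \<in> V" using \<open>e \<in> E\<close> by (rule edgeE)
    then show ?thesis using assms by auto
  qed
  then have "real (irr E) \<le> (\<Sum>e\<in>E. real \<Delta> - real (Min (degree E ` e)))"
    unfolding irr_eq_sum_Max_minus_Min by (auto simp: of_nat_diff intro!: sum_mono)
  then show ?thesis by (simp add: sum_subtractf mult.commute)
qed

lemma sum_inverse_Min_degree_le:
  assumes "\<forall>v\<in>V. degree E v \<le> \<Delta>" "\<Delta> > 0"
  shows "(\<Sum>e\<in>E. 1 / real (Min (degree E ` e))) + card E / real \<Delta> \<le> card V"
proof -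
  have "1 / real (Min (degree E ` e)) + 1 / real \<Delta> \<le> (\<Sum>v\<in>e. 1 / real (degree E v))"
    if e: "e \<in> E" for e
  proof -
    obtain u v where "e = {u, v}" "u \<in> V" "v \<in> V" using e by (rule edgeE)
    then have "0 < Max (degree E ` e)" "Max (degree E ` e) \<le> \<Delta>"
      using assms degree_pos_if_mem_edge[OF e, of u] by auto
    then have "1 / real \<Delta> \<le> 1 / real (Max (degree E ` e))"
      by (simp add: frac_le)
    then show ?thesis unfolding sum_inverse_degree_edge[OF e] by simp
  qed
  then have "(\<Sum>e\<in>E. 1 / real (Min (degree E ` e)) + 1 / real \<Delta>)
      \<le> (\<Sum>e\<in>E. \<Sum>v\<in>e. 1 / real (degree E v))"
    by (rule sum_mono)
  also have "\<dots> = (\<Sum>v\<in>V. real (degree E v) * (1 / real (degree E v)))"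
    using graph finite_edges edges_subset_vertices by (intro sum_edges_sum_endpoints) (auto simp: simple_graph_def)
  also have "\<dots> \<le> (\<Sum>v\<in>V. 1)"
    by (intro sum_mono) simp
  finally show ?thesis by (simp add: sum.distrib)
qed

lemma twice_card_edges_le:
  assumes "\<forall>v\<in>V. degree E v \<le> \<Delta>"
  shows "2 * card E \<le> \<Delta> * card V"
  using sum_degree_eq_twice_card_edges sum_mono[of V "degree E" "\<lambda>_. \<Delta>"] assms
  by (simp add: mult.commute)

lemma irr_le_max_degree_bound:
  assumes deg_le: "\<forall>v\<in>V. degree E v \<le> \<Delta>"
    and less: "card E < \<Delta> * card V"
  shows "real (irr E) \<le> (real \<Delta> * card V - 2 * card E) * real \<Delta> * card E
    / (real \<Delta> * card V - card E)"
proof -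
  define n m D where "n = real (card V)" and "m = real (card E)" and "D = real \<Delta>"
  define S H where "S = (\<Sum>e\<in>E. real (Min (degree E ` e)))"
    and "H = (\<Sum>e\<in>E. 1 / real (Min (degree E ` e)))"
  \<comment> \<open>the tangent point at which the tangent bound becomes Cauchy-Schwarz\<close>
  define L where "L = D * m / (D * n - m)"
  have pos: "D * n - m > 0"
    using less unfolding D_def n_def m_def by (metis diff_gt_0_iff_gt of_nat_less_iff of_nat_mult)
  have "\<Delta> > 0" using less by (auto intro: ccontr)
  then have D: "D > 0" by (simp add: D_def)
  have Min_pos: "\<forall>e\<in>E. real (Min (degree E ` e)) > 0"
    using Min_degree_edge_pos by simp
  have "L\<^sup>2 * H \<le> L\<^sup>2 * (n - m / D)"
    using sum_inverse_Min_degree_le[OF deg_le \<open>\<Delta> > 0\<close>]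
    by (intro mult_left_mono) (auto simp: H_def n_def m_def D_def)
  also have "\<dots> = L * (L * (D * n - m)) / D"
    using D by (simp add: power2_eq_square field_simps)
  also have "L * (D * n - m) = D * m"
    using pos by (simp add: L_def)
  also have "L * (D * m) / D = L * m"
    using D by simp
  finally have "S \<ge> L * m"
    using sum_ge_tangent_bound[OF Min_pos, of L] by (simp add: S_def H_def m_def)
  then have "real (irr E) \<le> D * m - L * m"
    using irr_le_max_degree_sum_Min[OF deg_le] by (simp add: S_def D_def m_def)
  also have "\<dots> = (D * n - 2 * m) * D * m / (D * n - m)"
    using pos by (simp add: L_def field_simps)
  finally show ?thesis by (simp add: n_def m_def D_def)
qed

end

lemma max_degree_bound_lt_3_minus_2_sqrt_2:
  fixes \<Delta> n m :: nat
  assumes "m < \<Delta> * n"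
  shows "(real \<Delta> * n - 2 * m) * \<Delta> * m / (real \<Delta> * n - m) < (3 - 2 * sqrt 2) * (real \<Delta>)\<^sup>2 * n"
proof -
  define N where "N = \<Delta> * n"
  have "\<Delta> > 0" using assms by (cases \<Delta>) auto
  have "sqrt 2 * (real N - m) \<noteq> real N"
    using sqrt_2_mult_nat_neq_nat[of "N - m" N] assms by (simp add: N_def of_nat_diff)
  then have "(real N - 2 * real m) * m < (3 - 2 * sqrt 2) * N * (N - real m)"
    by (rule mult_diff_lt_3_minus_2_sqrt_2)
  then have "(real N - 2 * real m) * \<Delta> * m < (3 - 2 * sqrt 2) * \<Delta> * N * (N - real m)"
    using mult_strict_right_mono[of _ _ "real \<Delta>"] \<open>\<Delta> > 0\<close> by (simp add: mult_ac)
  moreover have "real N - m > 0" using assms by (simp add: N_def flip: of_nat_mult)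
  ultimately have "(real N - 2 * real m) * \<Delta> * m / (N - real m) < (3 - 2 * sqrt 2) * \<Delta> * N"
    by (simp add: pos_divide_less_eq)
  then show ?thesis by (simp add: N_def power2_eq_square mult.assoc)
qed

theorem corollary1:
  fixes V :: "'a set" and E :: "'a set set" and \<Delta> :: nat
  assumes "simple_graph V E"
    and "card V \<ge> 1"
    and "\<Delta> \<ge> 1"
    and "\<forall>v\<in>V. degree E v \<le> \<Delta>"
  shows "real (irr E) \<le>
           (real \<Delta> * real (card V) - 2 * real (card E)) * real \<Delta> * real (card E)
             / (real \<Delta> * real (card V) - real (card E))
       \<and> (real \<Delta> * real (card V) - 2 * real (card E)) * real \<Delta> * real (card E)
             / (real \<Delta> * real (card V) - real (card E))
           < (3 - 2 * sqrt 2) * (real \<Delta>)\<^sup>2 * real (card V)"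
proof -
  have "2 * card E \<le> \<Delta> * card V"
    using twice_card_edges_le[OF assms(1,4)] .
  moreover have "\<Delta> * card V \<ge> 1" using assms(2,3) by simp
  ultimately have less: "card E < \<Delta> * card V" by linarith
  show ?thesis
    using irr_le_max_degree_bound[OF assms(1,4) less]
      max_degree_bound_lt_3_minus_2_sqrt_2[OF less] by simp
qed

end
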